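(* Let $\mathfrak{h}\subset\mathrm{Mat}_{2n+2}(\mathbb{C})$ be a Lie subalgebra (for the commutator bracket) of strictly upper-triangular matrices isomorphic to the Heisenberg Lie algebra $\mathfrak{h}_{2n+1}$, let $t$ span its center, let $\mathfrak{m}$ be the associative subalgebra of $\mathrm{Mat}_{2n+2}(\mathbb{C})$ generated by $\mathfrak{h}$, and let $\mathcal{A}=\mathbb{C}I_{2n+2}\oplus\mathfrak{m}$. If $t\cdot\mathfrak{m}=\mathfrak{m}\cdot t=0$, then $\mathfrak{m}^2\subset C(\mathcal{A})$, the center of $\mathcal{A}$.
   Context: The Heisenberg Lie algebra $\mathfrak{h}_{2n+1}$ is $\mathbb{W}\times\mathbb{C}$, $\mathbb{W}$ a $2n$-dimensional complex vector space with non-degenerate skew-symmetric form $\omega$, with bracket $[(w_1,t_1),(w_2,t_2)]=(0,\omega(w_1,w_2))$; its center $[\mathfrak{h}_{2n+1},\mathfrak{h}_{2n+1}]$ is one-dimensional. $\mathfrak{m}^2$ denotes the span of products of two elements of $\mathfrak{m}$. *)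

theory Defs
  imports "Jordan_Normal_Form.Matrix"
begin

definition W_space :: "nat \<Rightarrow> (nat \<Rightarrow> complex) set" where
  "W_space n = {w. \<forall>i\<ge>2*n. w i = 0}"

definition symplectic_form :: "nat \<Rightarrow> ((nat \<Rightarrow> complex) \<Rightarrow> (nat \<Rightarrow> complex) \<Rightarrow> complex) \<Rightarrow> bool" where
  "symplectic_form n \<omega> \<longleftrightarrow>
     (\<forall>u\<in>W_space n. \<forall>v\<in>W_space n. \<forall>x\<in>W_space n. \<forall>a b.
        \<omega> (\<lambda>i. a * u i + b * v i) x = a * \<omega> u x + b * \<omega> v x) \<and>
     (\<forall>u\<in>W_space n. \<forall>v\<in>W_space n. \<omega> u v = - \<omega> v u) \<and>
     (\<forall>u\<in>W_space n. (\<forall>v\<in>W_space n. \<omega> u v = 0) \<longrightarrow> u = (\<lambda>_. 0))"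

definition heis_carrier :: "nat \<Rightarrow> ((nat \<Rightarrow> complex) \<times> complex) set" where
  "heis_carrier n = W_space n \<times> UNIV"

definition heis_lincomb :: "complex \<Rightarrow> (nat \<Rightarrow> complex) \<times> complex \<Rightarrow> complex \<Rightarrow> (nat \<Rightarrow> complex) \<times> complex
    \<Rightarrow> (nat \<Rightarrow> complex) \<times> complex" where
  "heis_lincomb a x b y = ((\<lambda>i. a * fst x i + b * fst y i), a * snd x + b * snd y)"

definition heis_bracket :: "((nat \<Rightarrow> complex) \<Rightarrow> (nat \<Rightarrow> complex) \<Rightarrow> complex) \<Rightarrow>
    (nat \<Rightarrow> complex) \<times> complex \<Rightarrow> (nat \<Rightarrow> complex) \<times> complex \<Rightarrow> (nat \<Rightarrow> complex) \<times> complex" where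
  "heis_bracket \<omega> x y = ((\<lambda>_. 0), \<omega> (fst x) (fst y))"

definition commutator :: "complex mat \<Rightarrow> complex mat \<Rightarrow> complex mat" where
  "commutator A B = A * B - B * A"

definition strictly_upper :: "nat \<Rightarrow> complex mat \<Rightarrow> bool" where
  "strictly_upper N A \<longleftrightarrow> A \<in> carrier_mat N N \<and> (\<forall>i<N. \<forall>j<N. j \<le> i \<longrightarrow> A $$ (i, j) = 0)"

definition heisenberg_subalgebra :: "nat \<Rightarrow> nat \<Rightarrow> complex mat set \<Rightarrow> bool" where
  "heisenberg_subalgebra n N h \<longleftrightarrow>
    (\<exists>\<omega> \<phi>. symplectic_form n \<omega> \<and>
       inj_on \<phi> (heis_carrier n) \<and> h = \<phi> ` heis_carrier n \<and>
       (\<forall>x\<in>heis_carrier n. strictly_upper N (\<phi> x)) \<and>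
       (\<forall>x\<in>heis_carrier n. \<forall>y\<in>heis_carrier n. \<forall>a b.
          \<phi> (heis_lincomb a x b y) = a \<cdot>\<^sub>m \<phi> x + b \<cdot>\<^sub>m \<phi> y) \<and>
       (\<forall>x\<in>heis_carrier n. \<forall>y\<in>heis_carrier n.
          \<phi> (heis_bracket \<omega> x y) = commutator (\<phi> x) (\<phi> y)))"

definition lie_center :: "complex mat set \<Rightarrow> complex mat set" where
  "lie_center h = {x\<in>h. \<forall>y\<in>h. commutator x y = 0\<^sub>m (dim_row x) (dim_col x)}"

inductive_set assoc_gen :: "nat \<Rightarrow> complex mat set \<Rightarrow> complex mat set" for N S where
  gen: "x \<in> S \<Longrightarrow> x \<in> assoc_gen N S"
| zero: "0\<^sub>m N N \<in> assoc_gen N S"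
| add: "x \<in> assoc_gen N S \<Longrightarrow> y \<in> assoc_gen N S \<Longrightarrow> x + y \<in> assoc_gen N S"
| smult: "x \<in> assoc_gen N S \<Longrightarrow> c \<cdot>\<^sub>m x \<in> assoc_gen N S"
| mult: "x \<in> assoc_gen N S \<Longrightarrow> y \<in> assoc_gen N S \<Longrightarrow> x * y \<in> assoc_gen N S"

inductive_set mat_span :: "nat \<Rightarrow> complex mat set \<Rightarrow> complex mat set" for N S where
  zero: "0\<^sub>m N N \<in> mat_span N S"
| step: "x \<in> S \<Longrightarrow> y \<in> mat_span N S \<Longrightarrow> c \<cdot>\<^sub>m x + y \<in> mat_span N S"

definition mat_square :: "nat \<Rightarrow> complex mat set \<Rightarrow> complex mat set" where
  "mat_square N m = mat_span N {x * y | x y. x \<in> m \<and> y \<in> m}"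

definition unitalize :: "nat \<Rightarrow> complex mat set \<Rightarrow> complex mat set" where
  "unitalize N m = {c \<cdot>\<^sub>m 1\<^sub>m N + x | c x. x \<in> m}"

definition assoc_center :: "complex mat set \<Rightarrow> complex mat set" where
  "assoc_center A = {z\<in>A. \<forall>a\<in>A. z * a = a * z}"

end

(*
  For a, b in h the commutator [a, b] lies in the centre of h, hence is a multiple of t, so it
  annihilates m from both sides. Since [y z, w] = y [z, w] + [y, w] z and m-multiples of an
  annihilator of m still annihilate m, this passes from the generators to all y, z in m.
  For x, y, w in m we then get x y w = x w y = w x y, so every product x y commutes with m,
  and trivially with the identity; m^2 is spanned by such products.
*)

theory Submission
  imports Defs
begin

text \<open>The library's matrix algebra rules carry carrier hypotheses whose inner dimension the
  simplifier cannot guess for products; stated with dimension equations instead they are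
  discharged by \<open>simp\<close>.\<close>

lemma assoc_mult_mat_dim:
  "dim_col A = dim_row B \<Longrightarrow> dim_col B = dim_row C \<Longrightarrow> (A * B) * C = A * (B * C)"
  by (metis assoc_mult_mat carrier_mat_triv)

lemma add_mult_distrib_mat_dim:
  "dim_row A = dim_row B \<Longrightarrow> dim_col A = dim_col B \<Longrightarrow> dim_col A = dim_row C \<Longrightarrow>
    (A + B) * C = A * C + B * C"
  by (metis add_mult_distrib_mat carrier_mat_triv)

lemma mult_add_distrib_mat_dim:
  "dim_row B = dim_row C \<Longrightarrow> dim_col B = dim_col C \<Longrightarrow> dim_col A = dim_row B \<Longrightarrow>
    A * (B + C) = A * B + A * C"
  by (metis mult_add_distrib_mat carrier_mat_triv)

lemma minus_mult_distrib_mat_dim: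
  fixes A :: "'a :: ring mat"
  shows "dim_row A = dim_row B \<Longrightarrow> dim_col A = dim_col B \<Longrightarrow> dim_col A = dim_row C \<Longrightarrow>
    (A - B) * C = A * C - B * C"
  by (metis minus_mult_distrib_mat carrier_mat_triv)

lemma mult_minus_distrib_mat_dim:
  fixes A :: "'a :: ring mat"
  shows "dim_row B = dim_row C \<Longrightarrow> dim_col B = dim_col C \<Longrightarrow> dim_col A = dim_row B \<Longrightarrow>
    A * (B - C) = A * B - A * C"
  by (metis mult_minus_distrib_mat carrier_mat_triv)

lemma mult_smult_distrib_dim:
  fixes A :: "'a :: comm_semiring_0 mat"
  shows "dim_col A = dim_row B \<Longrightarrow> A * (k \<cdot>\<^sub>m B) = k \<cdot>\<^sub>m (A * B)"
  by (metis mult_smult_distrib carrier_mat_triv)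

lemma mult_smult_assoc_mat_dim:
  fixes A :: "'a :: comm_semiring_0 mat"
  shows "dim_col A = dim_row B \<Longrightarrow> (k \<cdot>\<^sub>m A) * B = k \<cdot>\<^sub>m (A * B)"
  by (metis mult_smult_assoc_mat carrier_mat_triv)

lemmas mat_dim_simps = assoc_mult_mat_dim add_mult_distrib_mat_dim mult_add_distrib_mat_dim
  minus_mult_distrib_mat_dim mult_minus_distrib_mat_dim mult_smult_distrib_dim mult_smult_assoc_mat_dim

lemma eq_if_minus_eq_zero_mat:
  fixes A B :: "'a :: ab_group_add mat"
  assumes "A \<in> carrier_mat nr nc" "B \<in> carrier_mat nr nc" "A - B = 0\<^sub>m nr nc"
  shows "A = B"
proof (rule eq_matI)
  fix i j assume ij: "i < dim_row B" "j < dim_col B"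
  have "A $$ (i, j) - B $$ (i, j) = (A - B) $$ (i, j)" using assms(1,2) ij by simp
  also have "\<dots> = 0" using assms ij by simp
  finally show "A $$ (i, j) = B $$ (i, j)" by simp
qed (use assms in auto)

lemma assoc_gen_subset_carrier:
  assumes "S \<subseteq> carrier_mat N N"
  shows "assoc_gen N S \<subseteq> carrier_mat N N"
proof
  fix x assume "x \<in> assoc_gen N S"
  then show "x \<in> carrier_mat N N"
    using assms by (induction rule: assoc_gen.induct) auto
qed

lemma mat_square_assoc_gen_subset: "mat_square N (assoc_gen N S) \<subseteq> assoc_gen N S"
proof
  fix p assume "p \<in> mat_square N (assoc_gen N S)"
  then show "p \<in> assoc_gen N S"
    unfolding mat_square_def
    by (induction rule: mat_span.induct) (auto intro: assoc_gen.intros)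
qed

text \<open>\<open>commutator_annihilates m y z\<close> says that \<open>m [y, z] = [y, z] m = 0\<close>, stated without
  subtraction so that no carrier bookkeeping is needed to use it.\<close>
definition commutator_annihilates :: "complex mat set \<Rightarrow> complex mat \<Rightarrow> complex mat \<Rightarrow> bool" where
  "commutator_annihilates m y z \<longleftrightarrow>
     (\<forall>x\<in>m. x * (y * z) = x * (z * y) \<and> (y * z) * x = (z * y) * x)"

lemma commutator_annihilates_sym:
  "commutator_annihilates m y z \<longleftrightarrow> commutator_annihilates m z y"
  unfolding commutator_annihilates_def by auto

lemma commutator_annihilatesI:
  assumes m: "m \<subseteq> carrier_mat N N" and a: "a \<in> carrier_mat N N" and b: "b \<in> carrier_mat N N"
    and ann: "\<And>x. x \<in> m \<Longrightarrow> x * commutator a b = 0\<^sub>m N N \<and> commutator a b * x = 0\<^sub>m N N"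
  shows "commutator_annihilates m a b"
  unfolding commutator_annihilates_def
proof (intro ballI conjI)
  fix x assume x: "x \<in> m"
  then have x_carrier: "x \<in> carrier_mat N N" using m by auto
  have "x * (a * b) - x * (b * a) = 0\<^sub>m N N"
    using ann[OF x] x_carrier a b by (simp add: commutator_def mat_dim_simps)
  then show "x * (a * b) = x * (b * a)"
    by (rule eq_if_minus_eq_zero_mat[rotated 2]) (use x_carrier a b in auto)
  have "(a * b) * x - (b * a) * x = 0\<^sub>m N N"
    using ann[OF x] x_carrier a b by (simp add: commutator_def mat_dim_simps)
  then show "(a * b) * x = (b * a) * x"
    by (rule eq_if_minus_eq_zero_mat[rotated 2]) (use x_carrier a b in auto)
qed

lemma commutator_annihilates_zero_left:
  assumes "m \<subseteq> carrier_mat N N" "z \<in> carrier_mat N N"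
  shows "commutator_annihilates m (0\<^sub>m N N) z"
  using assms unfolding commutator_annihilates_def
  by (auto simp: left_mult_zero_mat right_mult_zero_mat)

lemma commutator_annihilates_add_left:
  assumes m: "m \<subseteq> carrier_mat N N"
    and carriers: "y1 \<in> carrier_mat N N" "y2 \<in> carrier_mat N N" "z \<in> carrier_mat N N"
    and ann1: "commutator_annihilates m y1 z" and ann2: "commutator_annihilates m y2 z"
  shows "commutator_annihilates m (y1 + y2) z"
  unfolding commutator_annihilates_def
proof
  fix x assume x: "x \<in> m"
  have "x * (y1 * z) = x * (z * y1)" "(y1 * z) * x = (z * y1) * x"
    "x * (y2 * z) = x * (z * y2)" "(y2 * z) * x = (z * y2) * x"
    using ann1 ann2 x unfolding commutator_annihilates_def by auto
  moreover have "x \<in> carrier_mat N N" using m x by auto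
  ultimately show "x * ((y1 + y2) * z) = x * (z * (y1 + y2)) \<and>
      (y1 + y2) * z * x = z * (y1 + y2) * x"
    using carriers by (simp add: mat_dim_simps)
qed

lemma commutator_annihilates_smult_left:
  assumes m: "m \<subseteq> carrier_mat N N"
    and carriers: "y \<in> carrier_mat N N" "z \<in> carrier_mat N N"
    and ann: "commutator_annihilates m y z"
  shows "commutator_annihilates m (c \<cdot>\<^sub>m y) z"
  unfolding commutator_annihilates_def
proof
  fix x assume x: "x \<in> m"
  have "x * (y * z) = x * (z * y)" "(y * z) * x = (z * y) * x"
    using ann x unfolding commutator_annihilates_def by auto
  moreover have "x \<in> carrier_mat N N" using m x by auto
  ultimately show "x * ((c \<cdot>\<^sub>m y) * z) = x * (z * (c \<cdot>\<^sub>m y)) \<and>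
      (c \<cdot>\<^sub>m y) * z * x = z * (c \<cdot>\<^sub>m y) * x"
    using carriers by (simp add: mat_dim_simps)
qed

lemma commutator_annihilates_mult_left:
  assumes m: "m \<subseteq> carrier_mat N N" and z: "z \<in> carrier_mat N N"
    and closed: "\<And>a b. a \<in> m \<Longrightarrow> b \<in> m \<Longrightarrow> a * b \<in> m"
    and y1: "y1 \<in> m" and y2: "y2 \<in> m"
    and ann1: "commutator_annihilates m y1 z" and ann2: "commutator_annihilates m y2 z"
  shows "commutator_annihilates m (y1 * y2) z"
  unfolding commutator_annihilates_def
proof (intro ballI conjI)
  fix x assume x: "x \<in> m"
  have carriers: "x \<in> carrier_mat N N" "y1 \<in> carrier_mat N N" "y2 \<in> carrier_mat N N"
    using m x y1 y2 by auto
  have "x * ((y1 * y2) * z) = (x * y1) * (y2 * z)" using carriers z by (simp add: mat_dim_simps)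
  also have "\<dots> = (x * y1) * (z * y2)"
    using ann2 closed[OF x y1] unfolding commutator_annihilates_def by blast
  also have "\<dots> = (x * (y1 * z)) * y2" using carriers z by (simp add: mat_dim_simps)
  also have "\<dots> = (x * (z * y1)) * y2"
    using ann1 x unfolding commutator_annihilates_def by simp
  also have "\<dots> = x * (z * (y1 * y2))" using carriers z by (simp add: mat_dim_simps)
  finally show "x * ((y1 * y2) * z) = x * (z * (y1 * y2))" .
  have "((y1 * y2) * z) * x = y1 * ((y2 * z) * x)" using carriers z by (simp add: mat_dim_simps)
  also have "\<dots> = y1 * ((z * y2) * x)"
    using ann2 x unfolding commutator_annihilates_def by simp
  also have "\<dots> = (y1 * z) * (y2 * x)" using carriers z by (simp add: mat_dim_simps)
  also have "\<dots> = (z * y1) * (y2 * x)"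
    using ann1 closed[OF y2 x] unfolding commutator_annihilates_def by blast
  also have "\<dots> = (z * (y1 * y2)) * x" using carriers z by (simp add: mat_dim_simps)
  finally show "((y1 * y2) * z) * x = (z * (y1 * y2)) * x" .
qed

lemma commutator_annihilates_assoc_gen_left:
  assumes S: "S \<subseteq> carrier_mat N N" and z: "z \<in> carrier_mat N N"
    and gens: "\<And>a. a \<in> S \<Longrightarrow> commutator_annihilates (assoc_gen N S) a z"
    and y: "y \<in> assoc_gen N S"
  shows "commutator_annihilates (assoc_gen N S) y z"
  using y
proof (induction rule: assoc_gen.induct)
  case (gen a)
  then show ?case by (rule gens)
next
  case zero
  show ?case
    using commutator_annihilates_zero_left[OF assoc_gen_subset_carrier[OF S] z] .
next
  case (add y1 y2)
  then show ?case
    using commutator_annihilates_add_left[OF assoc_gen_subset_carrier[OF S] _ _ z]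
      assoc_gen_subset_carrier[OF S] by blast
next
  case (smult y c)
  then show ?case
    using commutator_annihilates_smult_left[OF assoc_gen_subset_carrier[OF S] _ z]
      assoc_gen_subset_carrier[OF S] by blast
next
  case (mult y1 y2)
  then show ?case
    using commutator_annihilates_mult_left[OF assoc_gen_subset_carrier[OF S] z assoc_gen.mult]
    by blast
qed

lemma commutator_annihilates_assoc_gen:
  assumes S: "S \<subseteq> carrier_mat N N"
    and gens: "\<And>a b. a \<in> S \<Longrightarrow> b \<in> S \<Longrightarrow> commutator_annihilates (assoc_gen N S) a b"
    and y: "y \<in> assoc_gen N S" and z: "z \<in> assoc_gen N S"
  shows "commutator_annihilates (assoc_gen N S) y z"
proof -
  have z_carrier: "z \<in> carrier_mat N N" using assoc_gen_subset_carrier[OF S] z by auto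
  have "commutator_annihilates (assoc_gen N S) a z" if a: "a \<in> S" for a
    using commutator_annihilates_assoc_gen_left[OF S _ _ z] a S gens commutator_annihilates_sym
    by blast
  then show ?thesis
    using commutator_annihilates_assoc_gen_left[OF S z_carrier _ y] by blast
qed

lemma mult_commute_if_commutator_annihilates:
  assumes carriers: "x \<in> carrier_mat N N" "y \<in> carrier_mat N N" "w \<in> carrier_mat N N"
    and "x \<in> m" "y \<in> m"
    and ann_y: "commutator_annihilates m y w" and ann_x: "commutator_annihilates m x w"
  shows "(x * y) * w = w * (x * y)"
proof -
  have "(x * y) * w = x * (y * w)" using carriers by (simp add: mat_dim_simps)
  also have "\<dots> = x * (w * y)"
    using ann_y \<open>x \<in> m\<close> unfolding commutator_annihilates_def by blast
  also have "\<dots> = (x * w) * y" using carriers by (simp add: mat_dim_simps)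
  also have "\<dots> = (w * x) * y"
    using ann_x \<open>y \<in> m\<close> unfolding commutator_annihilates_def by blast
  also have "\<dots> = w * (x * y)" using carriers by (simp add: mat_dim_simps)
  finally show ?thesis .
qed

definition centralizer :: "nat \<Rightarrow> complex mat set \<Rightarrow> complex mat set" where
  "centralizer N A = {z \<in> carrier_mat N N. \<forall>a\<in>A. z * a = a * z}"

lemma mat_span_subset_centralizer:
  assumes m: "m \<subseteq> carrier_mat N N" and P: "P \<subseteq> centralizer N m"
  shows "mat_span N P \<subseteq> centralizer N m"
proof
  fix p assume "p \<in> mat_span N P"
  then show "p \<in> centralizer N m"
  proof (induction rule: mat_span.induct)
    case zero
    show ?case
      using m unfolding centralizer_def by (auto simp: left_mult_zero_mat right_mult_zero_mat)
  next
    case (step x y c)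
    then have "x \<in> centralizer N m" using P by auto
    with step.IH m show ?case
      unfolding centralizer_def by (auto simp: mat_dim_simps)
  qed
qed

lemma subset_unitalize:
  assumes "m \<subseteq> carrier_mat N N"
  shows "m \<subseteq> unitalize N m"
proof
  fix x assume x: "x \<in> m"
  then have "x \<in> carrier_mat N N" using assms by auto
  then have "x = 0 \<cdot>\<^sub>m 1\<^sub>m N + x" by (intro eq_matI) auto
  with x show "x \<in> unitalize N m" unfolding unitalize_def by blast
qed

lemma centralizer_subset_centralizer_unitalize:
  assumes "m \<subseteq> carrier_mat N N"
  shows "centralizer N m \<subseteq> centralizer N (unitalize N m)"
proof
  fix p assume "p \<in> centralizer N m"
  then have p: "p \<in> carrier_mat N N" and comm: "\<And>x. x \<in> m \<Longrightarrow> p * x = x * p"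
    unfolding centralizer_def by auto
  have "p * a = a * p" if "a \<in> unitalize N m" for a
  proof -
    obtain c x where a: "a = c \<cdot>\<^sub>m 1\<^sub>m N + x" and x: "x \<in> m"
      using \<open>a \<in> unitalize N m\<close> unfolding unitalize_def by blast
    have "x \<in> carrier_mat N N" using assms x by auto
    then have "p * a = c \<cdot>\<^sub>m p + p * x" and "a * p = c \<cdot>\<^sub>m p + x * p"
      using p by (simp_all add: a mat_dim_simps)
    then show ?thesis using comm[OF x] by simp
  qed
  with p show "p \<in> centralizer N (unitalize N m)" unfolding centralizer_def by blast
qed

lemma mat_square_subset_assoc_center:
  assumes S: "S \<subseteq> carrier_mat N N"
    and gens: "\<And>a b. a \<in> S \<Longrightarrow> b \<in> S \<Longrightarrow> commutator_annihilates (assoc_gen N S) a b"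
  shows "mat_square N (assoc_gen N S) \<subseteq> assoc_center (unitalize N (assoc_gen N S))"
proof
  let ?m = "assoc_gen N S"
  have m: "?m \<subseteq> carrier_mat N N" using assoc_gen_subset_carrier[OF S] .
  have products: "x * y \<in> centralizer N ?m" if x: "x \<in> ?m" and y: "y \<in> ?m" for x y
    unfolding centralizer_def
  proof (intro CollectI conjI ballI)
    have "x \<in> carrier_mat N N" "y \<in> carrier_mat N N" using m x y by auto
    then show "x * y \<in> carrier_mat N N" by (rule mult_carrier_mat)
    fix w assume w: "w \<in> ?m"
    show "x * y * w = w * (x * y)"
      using mult_commute_if_commutator_annihilates[OF _ _ _ x y]
        commutator_annihilates_assoc_gen[OF S gens] x y w m
      by blast
  qed
  have "mat_square N ?m \<subseteq> centralizer N ?m"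
    unfolding mat_square_def using products by (intro mat_span_subset_centralizer[OF m]) blast
  then have central: "mat_square N ?m \<subseteq> centralizer N (unitalize N ?m)"
    using centralizer_subset_centralizer_unitalize[OF m] by (rule subset_trans)
  fix p assume "p \<in> mat_square N ?m"
  moreover have "mat_square N ?m \<subseteq> unitalize N ?m"
    using mat_square_assoc_gen_subset subset_unitalize[OF m] by blast
  ultimately show "p \<in> assoc_center (unitalize N ?m)"
    using central unfolding assoc_center_def centralizer_def by blast
qed

lemma symplectic_form_zero_left:
  assumes "symplectic_form n \<omega>" and "v \<in> W_space n"
  shows "\<omega> (\<lambda>_. 0) v = 0"
proof -
  have zero: "(\<lambda>_. 0) \<in> W_space n" unfolding W_space_def by simp
  have "\<forall>u\<in>W_space n. \<forall>w\<in>W_space n. \<forall>x\<in>W_space n. \<forall>a b.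
      \<omega> (\<lambda>i. a * u i + b * w i) x = a * \<omega> u x + b * \<omega> w x"
    using assms(1) unfolding symplectic_form_def by blast
  from this[rule_format, OF zero zero assms(2), of 0 0] show ?thesis by simp
qed

lemma heisenberg_subalgebra_carrier:
  assumes "heisenberg_subalgebra n N h"
  shows "h \<subseteq> carrier_mat N N"
  using assms unfolding heisenberg_subalgebra_def strictly_upper_def by auto

lemma heisenberg_commutator_in_lie_center:
  assumes h: "heisenberg_subalgebra n N h" and "a \<in> h" "b \<in> h"
  shows "commutator a b \<in> lie_center h"
proof -
  obtain \<omega> \<phi> where \<omega>: "symplectic_form n \<omega>" and h_image: "h = \<phi> ` heis_carrier n"
    and lin: "\<forall>x\<in>heis_carrier n. \<forall>y\<in>heis_carrier n. \<forall>a b.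
          \<phi> (heis_lincomb a x b y) = a \<cdot>\<^sub>m \<phi> x + b \<cdot>\<^sub>m \<phi> y"
    and br: "\<forall>x\<in>heis_carrier n. \<forall>y\<in>heis_carrier n.
          \<phi> (heis_bracket \<omega> x y) = commutator (\<phi> x) (\<phi> y)"
    using h unfolding heisenberg_subalgebra_def by blast
  have h_carrier: "h \<subseteq> carrier_mat N N" using heisenberg_subalgebra_carrier[OF h] .
  obtain u v where u: "u \<in> heis_carrier n" and v: "v \<in> heis_carrier n"
    and ab: "a = \<phi> u" "b = \<phi> v"
    using \<open>a \<in> h\<close> \<open>b \<in> h\<close> h_image by auto
  define k where "k = heis_bracket \<omega> u v"
  have k: "k \<in> heis_carrier n" and fst_k: "fst k = (\<lambda>_. 0)"
    unfolding k_def heis_bracket_def heis_carrier_def W_space_def by auto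
  have k_carrier: "\<phi> k \<in> carrier_mat N N" using k h_image h_carrier by auto
  have \<phi>_zero: "\<phi> ((\<lambda>_. 0), 0) = 0\<^sub>m N N"
  proof -
    have "\<phi> (heis_lincomb 0 k 0 k) = 0 \<cdot>\<^sub>m \<phi> k + 0 \<cdot>\<^sub>m \<phi> k" using lin k by blast
    also have "\<dots> = 0\<^sub>m N N" using k_carrier by (intro eq_matI) auto
    finally show ?thesis unfolding heis_lincomb_def by simp
  qed
  have "commutator (\<phi> k) y = 0\<^sub>m N N" if "y \<in> h" for y
  proof -
    obtain w where w: "w \<in> heis_carrier n" and y: "y = \<phi> w" using \<open>y \<in> h\<close> h_image by auto
    have "\<omega> (fst k) (fst w) = 0"
      using symplectic_form_zero_left[OF \<omega>] w fst_k unfolding heis_carrier_def by auto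
    then have "heis_bracket \<omega> k w = ((\<lambda>_. 0), 0)" unfolding heis_bracket_def by simp
    moreover have "commutator (\<phi> k) y = \<phi> (heis_bracket \<omega> k w)" using br k w y by simp
    ultimately show ?thesis using \<phi>_zero by simp
  qed
  moreover have "commutator a b = \<phi> k" using br u v ab unfolding k_def by simp
  moreover have "\<phi> k \<in> h" using k h_image by blast
  ultimately show ?thesis unfolding lie_center_def using k_carrier by simp
qed

theorem lemma3p3:
  fixes n :: nat and h :: "complex mat set" and t :: "complex mat"
  assumes "heisenberg_subalgebra n (2*n+2) h"
    and "t \<in> h" and "lie_center h = {c \<cdot>\<^sub>m t | c. True}"
    and "\<forall>x\<in>assoc_gen (2*n+2) h. t * x = 0\<^sub>m (2*n+2) (2*n+2) \<and> x * t = 0\<^sub>m (2*n+2) (2*n+2)"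
  shows "mat_square (2*n+2) (assoc_gen (2*n+2) h)
           \<subseteq> assoc_center (unitalize (2*n+2) (assoc_gen (2*n+2) h))"
proof (rule mat_square_subset_assoc_center)
  let ?N = "2*n+2"
  show h_carrier: "h \<subseteq> carrier_mat ?N ?N" using heisenberg_subalgebra_carrier[OF assms(1)] .
  have t_carrier: "t \<in> carrier_mat ?N ?N" using h_carrier assms(2) by auto
  fix a b assume "a \<in> h" "b \<in> h"
  then obtain c where c: "commutator a b = c \<cdot>\<^sub>m t"
    using heisenberg_commutator_in_lie_center[OF assms(1)] assms(3) by blast
  show "commutator_annihilates (assoc_gen ?N h) a b"
  proof (rule commutator_annihilatesI[OF assoc_gen_subset_carrier[OF h_carrier]])
    fix x assume x: "x \<in> assoc_gen ?N h"
    then have "x \<in> carrier_mat ?N ?N" using assoc_gen_subset_carrier[OF h_carrier] by auto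
    then show "x * commutator a b = 0\<^sub>m ?N ?N \<and> commutator a b * x = 0\<^sub>m ?N ?N"
      using assms(4) x t_carrier by (simp add: c mat_dim_simps)
  qed (use \<open>a \<in> h\<close> \<open>b \<in> h\<close> h_carrier in auto)
qed

end
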